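(* Let $c$ be a positive integer and $c/(c+1)\le\vartheta<1$. Let $(Z_t)$ be the random walk of the context with $r=1$. Define the rational function $$\xi(w)=\frac{[(1-\vartheta)(c+1)-1]w^2+[2-(1-\vartheta)(c+1)]w-(1-\vartheta)w^{c+1}-\vartheta}{(1-\vartheta)w^{c+2}-(1-\vartheta)w^{c+1}-w^2+(1+\vartheta)w-\vartheta},\quad w\in(-1,1).$$ Then $\pi(u,c,1,\vartheta)=\xi^{(u)}(0)/u!$ for all $u\in\mathbb{N}$, where $\xi^{(u)}(0)$ is the $u$-th derivative of $\xi$ at $w=0$. Consequently, for the single-agent trust model with prior parameters $\alpha,\beta\in\mathbb{N}$ and $r=1$, $p_{\rm quit}=\pi(u_{\rm crit},c,1,\vartheta)$ with $u_{\rm crit}=\alpha-c\beta+1$.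
   Context: Random walk: for $\vartheta\in(0,1)$ and positive integers $c,r$, let $Z_0=0$ and $Z_t=Z_{t-1}+\Delta_t$ with $\Delta_t$ i.i.d., $\Delta_t=+c$ with probability $1-\vartheta$ and $-r$ with probability $\vartheta$. Define $\pi(u,c,r,\vartheta):=\mathbb{P}(\exists t\ge0: Z_t\ge u)$. Single-agent trust model: $(X_t)$ i.i.d. Bernoulli$(\vartheta)$; $\hat S_t=\sum_{s\le t}X_s\mathbf{1}_{\{A_s=1\}}$, $\hat F_t=\sum_{s\le t}(1-X_s)\mathbf{1}_{\{A_s=1\}}$, $\hat\vartheta_t=\frac{\alpha+\hat S_t}{\alpha+\beta+\hat S_t+\hat F_t}$; $A_t=1$ iff $r\hat\vartheta_n-c(1-\hat\vartheta_n)\ge0$ for all $n\le t-1$; $\tau:=\inf\{t\in\mathbb{N}\cup\{\infty\}: r\hat\vartheta_t-c(1-\hat\vartheta_t)<0\}$; $p_{\rm quit}:=\mathbb{P}(\tau<\infty)$. *)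

theory Defs
  imports "HOL-Analysis.Analysis" "HOL-Probability.Probability"
begin

text \<open>Underlying i.i.d. Bernoulli(theta) sequence: a stream of booleans, entry s (s = 0,1,...)
  is the (s+1)-st variable; True has probability theta.\<close>
definition bern_stream :: "real \<Rightarrow> bool stream measure" where
  "bern_stream \<theta> = stream_space (measure_pmf (bernoulli_pmf \<theta>))"

definition rw_step :: "nat \<Rightarrow> nat \<Rightarrow> bool \<Rightarrow> int" where
  "rw_step c r b = (if b then - int r else int c)"

definition rw_Z :: "nat \<Rightarrow> nat \<Rightarrow> bool stream \<Rightarrow> nat \<Rightarrow> int" where
  "rw_Z c r \<omega> t = (\<Sum>s<t. rw_step c r (\<omega> !! s))"

definition rw_pi :: "int \<Rightarrow> nat \<Rightarrow> nat \<Rightarrow> real \<Rightarrow> real" where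
  "rw_pi u c r \<theta> = measure (bern_stream \<theta>) {\<omega> \<in> space (bern_stream \<theta>). \<exists>t. rw_Z c r \<omega> t \<ge> u}"

text \<open>Single-agent trust model. The pair (S,F) are the counts (hat S_t, hat F_t).\<close>
definition trust_theta :: "nat \<Rightarrow> nat \<Rightarrow> nat \<times> nat \<Rightarrow> real" where
  "trust_theta \<alpha> \<beta> SF = (real \<alpha> + real (fst SF)) / (real \<alpha> + real \<beta> + real (fst SF) + real (snd SF))"

definition trust_ok :: "nat \<Rightarrow> nat \<Rightarrow> nat \<Rightarrow> nat \<Rightarrow> nat \<times> nat \<Rightarrow> bool" where
  "trust_ok c r \<alpha> \<beta> SF \<longleftrightarrow> real r * trust_theta \<alpha> \<beta> SF - real c * (1 - trust_theta \<alpha> \<beta> SF) \<ge> 0"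

text \<open>(hat S_t, hat F_t): at step t+1 the variable X_{t+1} = \<omega> !! t is counted iff
  A_{t+1} = 1, i.e. iff the acceptance condition held at all times n <= t.\<close>
fun trust_counts :: "nat \<Rightarrow> nat \<Rightarrow> nat \<Rightarrow> nat \<Rightarrow> bool stream \<Rightarrow> nat \<Rightarrow> nat \<times> nat" where
  "trust_counts c r \<alpha> \<beta> \<omega> 0 = (0, 0)"
| "trust_counts c r \<alpha> \<beta> \<omega> (Suc t) =
     (if (\<forall>n\<in>{..t}. trust_ok c r \<alpha> \<beta> (trust_counts c r \<alpha> \<beta> \<omega> n))
      then (fst (trust_counts c r \<alpha> \<beta> \<omega> t) + (if \<omega> !! t then 1 else 0),
            snd (trust_counts c r \<alpha> \<beta> \<omega> t) + (if \<omega> !! t then 0 else 1))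
      else trust_counts c r \<alpha> \<beta> \<omega> t)"

definition p_quit :: "nat \<Rightarrow> nat \<Rightarrow> nat \<Rightarrow> nat \<Rightarrow> real \<Rightarrow> real" where
  "p_quit c r \<alpha> \<beta> \<theta> = measure (bern_stream \<theta>)
     {\<omega> \<in> space (bern_stream \<theta>). \<exists>t. \<not> trust_ok c r \<alpha> \<beta> (trust_counts c r \<alpha> \<beta> \<omega> t)}"

definition xi :: "nat \<Rightarrow> real \<Rightarrow> real \<Rightarrow> real" where
  "xi c \<theta> w =
    (((1 - \<theta>) * (real c + 1) - 1) * w^2 + (2 - (1 - \<theta>) * (real c + 1)) * w - (1 - \<theta>) * w^(c+1) - \<theta>) /
    ((1 - \<theta>) * w^(c+2) - (1 - \<theta>) * w^(c+1) - w^2 + (1 + \<theta>) * w - \<theta>)"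

end

theory Submission
  imports Defs
begin

text \<open>Conditioning on the first step shows that \<open>u \<mapsto> \<pi>(u)\<close> is the minimal nonnegative
  solution of \<open>f u = \<theta> f (u + 1) + (1 - \<theta>) f (u - c)\<close> for \<open>u \<ge> 1\<close> with \<open>f = 1\<close> on \<open>u \<le> 0\<close>.
  Since the walk steps down by exactly one, summing these equations telescopes into a renewal
  identity \<open>\<theta> f (k + 1) = K + (1 - \<theta>) (f k + \<dots> + f (k - c + 1))\<close> with a constant \<open>K\<close>.
  For solutions with values in \<open>[0, 1]\<close> the drift condition \<open>(1 - \<theta>) c \<le> \<theta>\<close> excludes \<open>K < 0\<close>,
  and minimality excludes \<open>K > 0\<close>; so \<open>\<pi>\<close> is the solution with \<open>K = 0\<close>, computed forwards by
  the recurrence. The denominator of \<open>\<xi>\<close> encodes that recurrence, so multiplying the generating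
  function of the solution by it leaves only the boundary terms, which form the numerator.
  For the trust model, while the agent is active \<open>\<alpha> + S\<^sub>t - c (\<beta> + F\<^sub>t) = \<alpha> - c \<beta> - Z\<^sub>t\<close>,
  so the agent quits exactly when the walk reaches \<open>\<alpha> - c \<beta> + 1\<close>.\<close>

lemma rw_Z_0 [simp]: "rw_Z c r \<omega> 0 = 0"
  by (simp add: rw_Z_def)

lemma rw_Z_Suc: "rw_Z c r \<omega> (Suc t) = rw_Z c r \<omega> t + rw_step c r (\<omega> !! t)"
  by (simp add: rw_Z_def)

lemma rw_Z_Cons_Suc: "rw_Z c r (x ## \<omega>) (Suc t) = rw_step c r x + rw_Z c r \<omega> t"
  unfolding rw_Z_def by (subst sum.lessThan_Suc_shift) simp

lemma space_bern_stream [simp]: "space (bern_stream \<theta>) = UNIV"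
  by (simp add: bern_stream_def space_stream_space)

lemma prob_space_bern_stream: "prob_space (bern_stream \<theta>)"
  unfolding bern_stream_def by (rule prob_space.prob_space_stream_space[OF prob_space_measure_pmf])

lemma measurable_rw_Z [measurable]:
  "(\<lambda>\<omega>. rw_Z c r \<omega> t) \<in> measurable (bern_stream \<theta>) (count_space UNIV)"
proof -
  have "(\<lambda>\<omega>. rw_Z c r \<omega> t) = (\<lambda>xs. \<Sum>s<t. rw_step c r (xs ! s)) \<circ> stake t"
    by (auto simp: rw_Z_def)
  also have "\<dots> \<in> measurable (stream_space (count_space UNIV)) (count_space UNIV)"
    by (rule measurable_comp[OF measurable_stake]) simp
  finally show ?thesis
    unfolding bern_stream_def
    by (simp add: measurable_cong_sets[OF sets_stream_space_cong[OF sets_measure_pmf_count_space] refl])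
qed

lemma measure_bern_stream_first_step:
  assumes "0 \<le> \<theta>" "\<theta> \<le> 1" and [measurable]: "Measurable.pred (bern_stream \<theta>) P"
  shows "measure (bern_stream \<theta>) {\<omega>. P \<omega>} =
     \<theta> * measure (bern_stream \<theta>) {\<omega>. P (True ## \<omega>)} +
     (1 - \<theta>) * measure (bern_stream \<theta>) {\<omega>. P (False ## \<omega>)}"
proof -
  let ?M = "measure_pmf (bernoulli_pmf \<theta>)"
  have [measurable]: "Measurable.pred (stream_space ?M) P"
    using assms(3) by (simp add: bern_stream_def)
  have "{\<omega> \<in> space (stream_space ?M). P \<omega>} \<in> sets (stream_space ?M)"
    by measurable
  then have "ennreal (measure (bern_stream \<theta>) {\<omega>. P \<omega>}) =
     (\<integral>\<^sup>+x. ennreal (measure (bern_stream \<theta>) {\<omega>. P (x ## \<omega>)}) \<partial>?M)"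
    using prob_space.prob_stream_space[where P = P and M = ?M, OF prob_space_measure_pmf]
    by (simp add: bern_stream_def space_stream_space)
  also have "\<dots> = ennreal (\<theta> * measure (bern_stream \<theta>) {\<omega>. P (True ## \<omega>)} +
     (1 - \<theta>) * measure (bern_stream \<theta>) {\<omega>. P (False ## \<omega>)})"
    using assms(1,2)
    by (simp add: nn_integral_measure_pmf nn_integral_count_space_finite UNIV_bool
        ennreal_mult ennreal_plus add.commute)
  finally show ?thesis
    using assms(1,2) by (subst (asm) ennreal_inj) auto
qed

definition rw_pi_before :: "int \<Rightarrow> nat \<Rightarrow> nat \<Rightarrow> real \<Rightarrow> nat \<Rightarrow> real" where
  "rw_pi_before u c r \<theta> n = measure (bern_stream \<theta>) {\<omega>. \<exists>t<n. u \<le> rw_Z c r \<omega> t}"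

definition rw_harmonic :: "nat \<Rightarrow> nat \<Rightarrow> real \<Rightarrow> (int \<Rightarrow> real) \<Rightarrow> bool" where
  "rw_harmonic c r \<theta> f \<longleftrightarrow>
     (\<forall>u\<le>0. f u = 1) \<and> (\<forall>u\<ge>1. f u = \<theta> * f (u + int r) + (1 - \<theta>) * f (u - int c))"

lemma rw_harmonic_boundary: "rw_harmonic c r \<theta> f \<Longrightarrow> u \<le> 0 \<Longrightarrow> f u = 1"
  unfolding rw_harmonic_def by blast

lemma rw_harmonic_step:
  "rw_harmonic c r \<theta> f \<Longrightarrow> 1 \<le> u \<Longrightarrow> f u = \<theta> * f (u + int r) + (1 - \<theta>) * f (u - int c)"
  unfolding rw_harmonic_def by blast

lemma rw_pi_before_le_1: "rw_pi_before u c r \<theta> n \<le> 1"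
  unfolding rw_pi_before_def using prob_space.prob_le_1[OF prob_space_bern_stream] by auto

lemma rw_pi_bounds: "0 \<le> rw_pi u c r \<theta>" "rw_pi u c r \<theta> \<le> 1"
  unfolding rw_pi_def using prob_space.prob_le_1[OF prob_space_bern_stream] by auto

lemma rw_pi_before_0 [simp]: "rw_pi_before u c r \<theta> 0 = 0"
  by (simp add: rw_pi_before_def)

lemma rw_hits_before_Suc_Cons_iff:
  assumes "1 \<le> u"
  shows "(\<exists>t<Suc n. u \<le> rw_Z c r (x ## \<omega>) t) \<longleftrightarrow> (\<exists>t<n. u - rw_step c r x \<le> rw_Z c r \<omega> t)"
  using assms by (simp add: Ex_less_Suc2 rw_Z_Cons_Suc algebra_simps)

lemma rw_pi_before_Suc:
  assumes "0 \<le> \<theta>" "\<theta> \<le> 1" "1 \<le> u"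
  shows "rw_pi_before u c r \<theta> (Suc n) =
    \<theta> * rw_pi_before (u + int r) c r \<theta> n + (1 - \<theta>) * rw_pi_before (u - int c) c r \<theta> n"
proof -
  have "rw_pi_before u c r \<theta> (Suc n) =
      \<theta> * measure (bern_stream \<theta>) {\<omega>. \<exists>t<Suc n. u \<le> rw_Z c r (True ## \<omega>) t} +
      (1 - \<theta>) * measure (bern_stream \<theta>) {\<omega>. \<exists>t<Suc n. u \<le> rw_Z c r (False ## \<omega>) t}"
    unfolding rw_pi_before_def by (rule measure_bern_stream_first_step[OF assms(1,2)]) measurable
  then show ?thesis
    unfolding rw_hits_before_Suc_Cons_iff[OF assms(3)] by (simp add: rw_pi_before_def rw_step_def)
qed

lemma rw_pi_before_tendsto: "(\<lambda>n. rw_pi_before u c r \<theta> n) \<longlonglongrightarrow> rw_pi u c r \<theta>"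
proof -
  interpret prob_space "bern_stream \<theta>"
    by (rule prob_space_bern_stream)
  let ?A = "\<lambda>n. {\<omega>. \<exists>t<n. u \<le> rw_Z c r \<omega> t}"
  have "(\<lambda>n. prob (?A n)) \<longlonglongrightarrow> prob (\<Union>n. ?A n)"
  proof (rule finite_Lim_measure_incseq)
    have "{\<omega> \<in> space (bern_stream \<theta>). \<exists>t<n. u \<le> rw_Z c r \<omega> t} \<in> events" for n
      by measurable
    then show "range ?A \<subseteq> events"
      by auto
    show "incseq ?A"
      by (auto simp: incseq_def intro: less_le_trans)
  qed
  moreover have "(\<Union>n. ?A n) = {\<omega>. \<exists>t. u \<le> rw_Z c r \<omega> t}"
    by blast
  ultimately show ?thesis
    by (simp add: rw_pi_before_def rw_pi_def)
qed

lemma rw_harmonic_rw_pi: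
  assumes "0 \<le> \<theta>" "\<theta> \<le> 1"
  shows "rw_harmonic c r \<theta> (\<lambda>u. rw_pi u c r \<theta>)"
  unfolding rw_harmonic_def
proof safe
  fix u :: int
  assume "u \<le> 0"
  then have "{\<omega>. \<exists>t. u \<le> rw_Z c r \<omega> t} = space (bern_stream \<theta>)"
    by (auto intro!: exI[of _ 0])
  then show "rw_pi u c r \<theta> = 1"
    using prob_space.prob_space[OF prob_space_bern_stream] by (simp add: rw_pi_def)
next
  fix u :: int
  assume "1 \<le> u"
  have "(\<lambda>n. rw_pi_before u c r \<theta> (Suc n)) \<longlonglongrightarrow> rw_pi u c r \<theta>"
    by (rule LIMSEQ_Suc[OF rw_pi_before_tendsto])
  moreover have "(\<lambda>n. rw_pi_before u c r \<theta> (Suc n)) \<longlonglongrightarrow>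
      \<theta> * rw_pi (u + int r) c r \<theta> + (1 - \<theta>) * rw_pi (u - int c) c r \<theta>"
    unfolding rw_pi_before_Suc[OF assms \<open>1 \<le> u\<close>]
    by (intro tendsto_intros rw_pi_before_tendsto)
  ultimately show "rw_pi u c r \<theta> = \<theta> * rw_pi (u + int r) c r \<theta> + (1 - \<theta>) * rw_pi (u - int c) c r \<theta>"
    by (rule LIMSEQ_unique)
qed

lemma rw_pi_le_harmonic:
  assumes "0 \<le> \<theta>" "\<theta> \<le> 1" and f: "rw_harmonic c r \<theta> f" "\<And>u. 0 \<le> f u"
  shows "rw_pi u c r \<theta> \<le> f u"
proof -
  have "rw_pi_before u c r \<theta> n \<le> f u" for n
  proof (induction n arbitrary: u)
    case 0
    show ?case
      using f(2) by simp
  next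
    case (Suc n)
    show ?case
    proof (cases "u \<le> 0")
      case True
      then show ?thesis
        using rw_harmonic_boundary[OF f(1)] rw_pi_before_le_1 by simp
    next
      case False
      then have "rw_pi_before u c r \<theta> (Suc n) =
          \<theta> * rw_pi_before (u + int r) c r \<theta> n + (1 - \<theta>) * rw_pi_before (u - int c) c r \<theta> n"
        using rw_pi_before_Suc[OF assms(1,2)] by simp
      also have "\<dots> \<le> \<theta> * f (u + int r) + (1 - \<theta>) * f (u - int c)"
        using Suc.IH assms(1,2) by (intro add_mono mult_left_mono) auto
      also have "\<dots> = f u"
        using rw_harmonic_step[OF f(1), of u] False by simp
      finally show ?thesis .
    qed
  qed
  then show ?thesis
    by (intro LIMSEQ_le_const2[OF rw_pi_before_tendsto]) blast
qed

lemma trust_ok_iff: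
  assumes "\<alpha> > 0"
  shows "trust_ok c 1 \<alpha> \<beta> SF \<longleftrightarrow> int c * int (\<beta> + snd SF) \<le> int (\<alpha> + fst SF)"
proof -
  define a where "a = real \<alpha> + real (fst SF)"
  define d where "d = a + real \<beta> + real (snd SF)"
  have "d > 0"
    using assms by (simp add: a_def d_def)
  have "trust_theta \<alpha> \<beta> SF = a / d"
    by (simp add: trust_theta_def a_def d_def add.assoc add.left_commute)
  then have "real 1 * trust_theta \<alpha> \<beta> SF - real c * (1 - trust_theta \<alpha> \<beta> SF)
      = (a - real c * (real \<beta> + real (snd SF))) / d"
    using \<open>d > 0\<close> by (simp add: field_simps d_def)
  then have "trust_ok c 1 \<alpha> \<beta> SF \<longleftrightarrow> 0 \<le> (a - real c * (real \<beta> + real (snd SF))) / d"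
    unfolding trust_ok_def by simp
  also have "\<dots> \<longleftrightarrow> real c * (real \<beta> + real (snd SF)) \<le> real \<alpha> + real (fst SF)"
    using \<open>d > 0\<close> by (simp add: zero_le_divide_iff a_def)
  also have "\<dots> \<longleftrightarrow> c * (\<beta> + snd SF) \<le> \<alpha> + fst SF"
    by (metis of_nat_add of_nat_le_iff of_nat_mult)
  also have "\<dots> \<longleftrightarrow> int c * int (\<beta> + snd SF) \<le> int (\<alpha> + fst SF)"
    by (simp only: of_nat_mult[symmetric] of_nat_le_iff)
  finally show ?thesis .
qed

lemma trust_counts_margin:
  assumes "\<forall>n<t. trust_ok c 1 \<alpha> \<beta> (trust_counts c 1 \<alpha> \<beta> \<omega> n)"
  shows "int (\<alpha> + fst (trust_counts c 1 \<alpha> \<beta> \<omega> t)) - int c * int (\<beta> + snd (trust_counts c 1 \<alpha> \<beta> \<omega> t))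
    = int \<alpha> - int c * int \<beta> - rw_Z c 1 \<omega> t"
  using assms
proof (induction t)
  case 0
  show ?case
    by simp
next
  case (Suc t)
  let ?SF = "trust_counts c 1 \<alpha> \<beta> \<omega>"
  have "\<forall>n\<in>{..t}. trust_ok c 1 \<alpha> \<beta> (?SF n)"
    using Suc.prems by auto
  then have SF_Suc: "?SF (Suc t) =
      (fst (?SF t) + (if \<omega> !! t then 1 else 0), snd (?SF t) + (if \<omega> !! t then 0 else 1))"
    unfolding trust_counts.simps(2) by (rule if_P)
  have "int (\<alpha> + fst (?SF t)) - int c * int (\<beta> + snd (?SF t)) = int \<alpha> - int c * int \<beta> - rw_Z c 1 \<omega> t"
    using Suc.IH Suc.prems by simp
  then show ?case
    unfolding SF_Suc by (cases "\<omega> !! t") (simp_all add: rw_Z_Suc rw_step_def algebra_simps)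
qed

lemma trust_quit_iff_rw_hits:
  assumes "\<alpha> > 0"
  shows "(\<exists>t. \<not> trust_ok c 1 \<alpha> \<beta> (trust_counts c 1 \<alpha> \<beta> \<omega> t)) \<longleftrightarrow>
         (\<exists>t. int \<alpha> - int c * int \<beta> + 1 \<le> rw_Z c 1 \<omega> t)"
proof
  assume "\<exists>t. \<not> trust_ok c 1 \<alpha> \<beta> (trust_counts c 1 \<alpha> \<beta> \<omega> t)"
  then obtain t where t: "\<not> trust_ok c 1 \<alpha> \<beta> (trust_counts c 1 \<alpha> \<beta> \<omega> t)"
    and before: "\<forall>n<t. trust_ok c 1 \<alpha> \<beta> (trust_counts c 1 \<alpha> \<beta> \<omega> n)"
    using exists_least_iff[of "\<lambda>t. \<not> trust_ok c 1 \<alpha> \<beta> (trust_counts c 1 \<alpha> \<beta> \<omega> t)"] by blast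
  from t have "int (\<alpha> + fst (trust_counts c 1 \<alpha> \<beta> \<omega> t))
      < int c * int (\<beta> + snd (trust_counts c 1 \<alpha> \<beta> \<omega> t))"
    unfolding trust_ok_iff[OF assms] by linarith
  then have "int \<alpha> - int c * int \<beta> + 1 \<le> rw_Z c 1 \<omega> t"
    using trust_counts_margin[OF before] by linarith
  then show "\<exists>t. int \<alpha> - int c * int \<beta> + 1 \<le> rw_Z c 1 \<omega> t" ..
next
  assume "\<exists>t. int \<alpha> - int c * int \<beta> + 1 \<le> rw_Z c 1 \<omega> t"
  then obtain t where t: "int \<alpha> - int c * int \<beta> + 1 \<le> rw_Z c 1 \<omega> t" ..
  show "\<exists>t. \<not> trust_ok c 1 \<alpha> \<beta> (trust_counts c 1 \<alpha> \<beta> \<omega> t)"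
  proof (cases "\<forall>n<t. trust_ok c 1 \<alpha> \<beta> (trust_counts c 1 \<alpha> \<beta> \<omega> n)")
    case True
    then have "int (\<alpha> + fst (trust_counts c 1 \<alpha> \<beta> \<omega> t))
        < int c * int (\<beta> + snd (trust_counts c 1 \<alpha> \<beta> \<omega> t))"
      using t trust_counts_margin[OF True] by linarith
    then have "\<not> trust_ok c 1 \<alpha> \<beta> (trust_counts c 1 \<alpha> \<beta> \<omega> t)"
      unfolding trust_ok_iff[OF assms] by linarith
    then show ?thesis ..
  qed blast
qed

lemma p_quit_eq_rw_pi:
  assumes "\<alpha> > 0"
  shows "p_quit c 1 \<alpha> \<beta> \<theta> = rw_pi (int \<alpha> - int c * int \<beta> + 1) c 1 \<theta>"
  unfolding p_quit_def rw_pi_def trust_quit_iff_rw_hits[OF assms] ..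

text \<open>The harmonic recurrence solved forwards from the boundary values; the initial value
  \<open>c (1 - \<theta>) / \<theta>\<close> is the one for which the renewal constant vanishes.\<close>
fun xi_coeff :: "nat \<Rightarrow> real \<Rightarrow> nat \<Rightarrow> real" where
  "xi_coeff c \<theta> 0 = 1"
| "xi_coeff c \<theta> (Suc 0) = real c * (1 - \<theta>) / \<theta>"
| "xi_coeff c \<theta> (Suc (Suc n)) =
     (xi_coeff c \<theta> (Suc n) - (1 - \<theta>) * (if n + 1 < c then 1 else xi_coeff c \<theta> (n + 1 - c))) / \<theta>"

definition xi_seq :: "nat \<Rightarrow> real \<Rightarrow> int \<Rightarrow> real" where
  "xi_seq c \<theta> u = (if u < 0 then 1 else xi_coeff c \<theta> (nat u))"

lemma xi_seq_nonpos: "u \<le> 0 \<Longrightarrow> xi_seq c \<theta> u = 1"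
  by (auto simp: xi_seq_def)

lemma xi_seq_of_nat [simp]: "xi_seq c \<theta> (int n) = xi_coeff c \<theta> n"
  by (simp add: xi_seq_def)

lemma xi_seq_1: "xi_seq c \<theta> 1 = real c * (1 - \<theta>) / \<theta>"
  using xi_seq_of_nat[of c \<theta> 1] by simp

lemma xi_seq_defect:
  assumes "\<theta> > 0"
  shows "\<theta> * xi_seq c \<theta> (m + 1) - xi_seq c \<theta> m + (1 - \<theta>) * xi_seq c \<theta> (m - int c) =
    (if m = 0 then real c * (1 - \<theta>) - \<theta> else 0)"
proof (cases "m \<le> 0")
  case True
  then show ?thesis
    using assms by (cases "m = 0") (simp_all add: xi_seq_nonpos xi_seq_def)
next
  case False
  define n where "n = nat (m - 1)"
  have m: "m = int n + 1"
    using False by (simp add: n_def)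
  have "xi_seq c \<theta> (m - int c) = (if n + 1 < c then 1 else xi_coeff c \<theta> (n + 1 - c))"
  proof (cases "n + 1 < c")
    case True
    then show ?thesis
      using m by (simp add: xi_seq_def)
  next
    case False
    then have "m - int c = int (n + 1 - c)"
      using m by simp
    then have "xi_seq c \<theta> (m - int c) = xi_coeff c \<theta> (n + 1 - c)"
      by (simp only: xi_seq_of_nat)
    with False show ?thesis
      by simp
  qed
  moreover have "xi_seq c \<theta> (m + 1) = xi_coeff c \<theta> (Suc (Suc n))" "xi_seq c \<theta> m = xi_coeff c \<theta> (Suc n)"
    using m by (simp_all add: xi_seq_def nat_add_distrib)
  ultimately show ?thesis
    using assms m by (simp add: field_simps)
qed

lemma rw_harmonic_xi_seq:
  assumes "\<theta> > 0"
  shows "rw_harmonic c 1 \<theta> (xi_seq c \<theta>)"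
  unfolding rw_harmonic_def
proof safe
  fix u :: int
  assume "1 \<le> u"
  then have "\<theta> * xi_seq c \<theta> (u + 1) - xi_seq c \<theta> u + (1 - \<theta>) * xi_seq c \<theta> (u - int c) = 0"
    using xi_seq_defect[OF assms, where m = u and c = c] by simp
  then show "xi_seq c \<theta> u = \<theta> * xi_seq c \<theta> (u + int 1) + (1 - \<theta>) * xi_seq c \<theta> (u - int c)"
    by simp
qed (simp add: xi_seq_nonpos)

text \<open>The harmonic equations at \<open>1, \<dots>, k + 1\<close> telescope, because the walk steps down by one.\<close>
lemma rw_harmonic_renewal:
  assumes "rw_harmonic c 1 \<theta> f"
  shows "\<theta> * f (int k + 1) = (\<theta> * f 1 - (1 - \<theta>) * real c) + (1 - \<theta>) * (\<Sum>j<c. f (int k - int j))"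
proof (induction k)
  case 0
  have "(\<Sum>j<c. f (- int j)) = real c"
    using rw_harmonic_boundary[OF assms] by simp
  then show ?case
    by simp
next
  case (Suc k)
  let ?K = "\<theta> * f 1 - (1 - \<theta>) * real c"
  have tele: "(\<Sum>j<c. f (int (Suc k) - int j))
      = (\<Sum>j<c. f (int k - int j)) + f (int k + 1) - f (int k + 1 - int c)"
    using sum_lessThan_telescope'[of "\<lambda>j. f (int k + 1 - int j)" c] by (simp add: sum_subtractf algebra_simps)
  have "\<theta> * f (int (Suc k) + 1) = f (int k + 1) - (1 - \<theta>) * f (int k + 1 - int c)"
    using rw_harmonic_step[OF assms, of "int k + 1"] by (simp add: algebra_simps)
  also have "\<dots> = ?K + (1 - \<theta>) * ((\<Sum>j<c. f (int k - int j)) + f (int k + 1) - f (int k + 1 - int c))"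
    using Suc.IH by (simp add: algebra_simps)
  also have "\<dots> = ?K + (1 - \<theta>) * (\<Sum>j<c. f (int (Suc k) - int j))"
    by (simp only: tele)
  finally show ?case .
qed

lemma xi_seq_renewal:
  assumes "\<theta> > 0"
  shows "\<theta> * xi_seq c \<theta> (int k + 1) = (1 - \<theta>) * (\<Sum>j<c. xi_seq c \<theta> (int k - int j))"
  using rw_harmonic_renewal[OF rw_harmonic_xi_seq[OF assms], where k = k] assms by (simp add: xi_seq_1)

lemma int_induct_from_nonpos [case_names nonpos step]:
  fixes u :: int
  assumes "\<And>u. u \<le> 0 \<Longrightarrow> P u" and "\<And>k. (\<And>u. u \<le> int k \<Longrightarrow> P u) \<Longrightarrow> P (int k + 1)"
  shows "P u"
proof -
  have "\<forall>u\<le>int k. P u" for k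
  proof (induction k)
    case 0
    then show ?case
      using assms(1) by simp
  next
    case (Suc k)
    then have "P (int k + 1)"
      using assms(2) by blast
    moreover have "u \<le> int (Suc k) \<Longrightarrow> u \<le> int k \<or> u = int k + 1" for u
      by linarith
    ultimately show ?case
      using Suc by blast
  qed
  then show ?thesis
    by (meson nat_le_iff order_refl)
qed

lemma renewal_unique:
  fixes f g :: "int \<Rightarrow> real"
  assumes "\<theta> \<noteq> 0" and "\<And>u. u \<le> 0 \<Longrightarrow> f u = g u"
    and "\<And>k. \<theta> * f (int k + 1) = K + (1 - \<theta>) * (\<Sum>j<c. f (int k - int j))"
    and "\<And>k. \<theta> * g (int k + 1) = K + (1 - \<theta>) * (\<Sum>j<c. g (int k - int j))"
  shows "f u = g u"
proof (induction u rule: int_induct_from_nonpos)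
  case (nonpos u)
  then show ?case
    by (rule assms(2))
next
  case (step k)
  then have "(\<Sum>j<c. f (int k - int j)) = (\<Sum>j<c. g (int k - int j))"
    by (intro sum.cong) auto
  then have "\<theta> * f (int k + 1) = \<theta> * g (int k + 1)"
    using assms(3,4)[of k] by simp
  then show ?case
    using assms(1) by simp
qed

lemma xi_seq_nonneg:
  assumes "0 < \<theta>" "\<theta> < 1"
  shows "0 \<le> xi_seq c \<theta> u"
proof (induction u rule: int_induct_from_nonpos)
  case (nonpos u)
  then show ?case
    by (simp add: xi_seq_nonpos)
next
  case (step k)
  then have "0 \<le> (1 - \<theta>) * (\<Sum>j<c. xi_seq c \<theta> (int k - int j))"
    using assms by (intro mult_nonneg_nonneg sum_nonneg) auto
  then have "0 \<le> \<theta> * xi_seq c \<theta> (int k + 1)"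
    using xi_seq_renewal[OF assms(1), where c = c and k = k] by simp
  then show ?case
    using assms(1) by (simp add: zero_le_mult_iff)
qed

text \<open>Nonpositive drift: a negative renewal constant would make f decrease by a fixed amount
  every c steps, eventually below 0.\<close>
lemma renewal_const_nonneg:
  fixes f :: "int \<Rightarrow> real"
  assumes "c > 0" "0 < \<theta>" "\<theta> \<le> 1" and drift: "(1 - \<theta>) * real c \<le> \<theta>"
    and f_nonneg: "\<And>u. 0 \<le> f u" and f_le_1: "\<And>u. f u \<le> 1"
    and renewal: "\<And>k. \<theta> * f (int k + 1) = K + (1 - \<theta>) * (\<Sum>j<c. f (int k - int j))"
  shows "0 \<le> K"
proof (rule ccontr)
  assume "\<not> 0 \<le> K"
  define \<delta> where "\<delta> = - K / \<theta>"
  have "\<delta> > 0"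
    using \<open>\<not> 0 \<le> K\<close> \<open>0 < \<theta>\<close> by (simp add: \<delta>_def divide_neg_pos)
  have decay: "f (int k + 1) \<le> 1 - real n * \<delta>" if "n * c \<le> k" for n k
    using that
  proof (induction n arbitrary: k)
    case 0
    show ?case
      using f_le_1 by simp
  next
    case (Suc n)
    define B where "B = 1 - real n * \<delta>"
    have window: "f (int k - int j) \<le> B" if "j < c" for j
    proof -
      have "n * c \<le> k - Suc j"
        using Suc.prems that by auto
      then have "f (int (k - Suc j) + 1) \<le> B"
        using Suc.IH unfolding B_def by blast
      moreover have "int (k - Suc j) + 1 = int k - int j"
        using Suc.prems that by auto
      ultimately show ?thesis
        by simp
    qed
    have "0 \<le> B"
      using window[of 0] f_nonneg[of "int k"] \<open>c > 0\<close> by simp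
    have "(\<Sum>j<c. f (int k - int j)) \<le> real c * B"
      using sum_mono[of "{..<c}" "\<lambda>j. f (int k - int j)" "\<lambda>_. B"] window by simp
    then have "(1 - \<theta>) * (\<Sum>j<c. f (int k - int j)) \<le> (1 - \<theta>) * (real c * B)"
      using \<open>\<theta> \<le> 1\<close> by (intro mult_left_mono) auto
    then have "\<theta> * f (int k + 1) \<le> K + (1 - \<theta>) * (real c * B)"
      using renewal[of k] by linarith
    also have "\<dots> \<le> K + \<theta> * B"
      using mult_right_mono[OF drift \<open>0 \<le> B\<close>] by (simp add: mult.assoc)
    finally have "\<theta> * f (int k + 1) \<le> \<theta> * (B - \<delta>)"
      using \<open>0 < \<theta>\<close> by (simp add: \<delta>_def algebra_simps)
    then have "f (int k + 1) \<le> B - \<delta>"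
      using \<open>0 < \<theta>\<close> by simp
    then show ?case
      by (simp add: B_def algebra_simps)
  qed
  obtain n where "1 < real n * \<delta>"
    using \<open>\<delta> > 0\<close> reals_Archimedean3 by blast
  then show False
    using decay[of n "n * c"] f_nonneg[of "int (n * c) + 1"] by simp
qed

lemma rw_harmonic_eq_xi_seq:
  assumes "c > 0" "0 < \<theta>" "\<theta> < 1" and drift: "(1 - \<theta>) * real c \<le> \<theta>"
    and f: "rw_harmonic c 1 \<theta> f" "\<And>u. 0 \<le> f u" "\<And>u. f u \<le> 1"
    and f_1: "f 1 \<le> xi_seq c \<theta> 1"
  shows "f u = xi_seq c \<theta> u"
proof -
  let ?K = "\<theta> * f 1 - (1 - \<theta>) * real c"
  have renewal: "\<theta> * f (int k + 1) = ?K + (1 - \<theta>) * (\<Sum>j<c. f (int k - int j))" for k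
    by (rule rw_harmonic_renewal[OF f(1)])
  have "?K \<le> 0"
    using f_1 \<open>0 < \<theta>\<close> by (simp add: xi_seq_1 field_simps)
  moreover have "0 \<le> ?K"
    using renewal_const_nonneg[OF assms(1,2) _ drift f(2,3) renewal] assms(3) by simp
  ultimately have "?K = 0"
    by linarith
  show ?thesis
  proof (rule renewal_unique)
    show "\<theta> \<noteq> 0"
      using \<open>0 < \<theta>\<close> by simp
    show "u \<le> 0 \<Longrightarrow> f u = xi_seq c \<theta> u" for u
      using rw_harmonic_boundary[OF f(1)] xi_seq_nonpos by simp
    show "\<theta> * f (int k + 1) = 0 + (1 - \<theta>) * (\<Sum>j<c. f (int k - int j))" for k
      using renewal[of k] \<open>?K = 0\<close> by simp
    show "\<theta> * xi_seq c \<theta> (int k + 1) = 0 + (1 - \<theta>) * (\<Sum>j<c. xi_seq c \<theta> (int k - int j))" for k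
      using xi_seq_renewal[OF \<open>0 < \<theta>\<close>] by simp
  qed
qed

lemma fps_nth_eq_higher_deriv:
  fixes f :: "'a :: {banach, real_normed_field} \<Rightarrow> 'a"
  assumes "f has_fps_expansion F"
  shows "fps_nth F n = (deriv ^^ n) f 0 / fact n"
  using assms
proof (induction n arbitrary: f F)
  case 0
  then show ?case
    by (auto simp: has_fps_expansion_def eval_fps_at_0 dest: eventually_nhds_x_imp_x)
next
  case (Suc n)
  have "fps_nth (fps_deriv F) n = (deriv ^^ n) (deriv f) 0 / fact n"
    using Suc.IH[OF has_fps_expansion_deriv[OF Suc.prems]] .
  then show ?case
    by (simp add: funpow_Suc_right field_simps del: of_nat_Suc funpow.simps)
qed

definition xi_numer :: "nat \<Rightarrow> real \<Rightarrow> real fps" where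
  "xi_numer c \<theta> = fps_const ((1 - \<theta>) * (real c + 1) - 1) * fps_X^2
     + fps_const (2 - (1 - \<theta>) * (real c + 1)) * fps_X - fps_const (1 - \<theta>) * fps_X^(c+1) - fps_const \<theta>"

definition xi_denom :: "nat \<Rightarrow> real \<Rightarrow> real fps" where
  "xi_denom c \<theta> = fps_const (1 - \<theta>) * fps_X^(c+2) - fps_const (1 - \<theta>) * fps_X^(c+1) - fps_X^2
     + fps_const (1 + \<theta>) * fps_X - fps_const \<theta>"

lemma xi_coeff_mult_X_power_nth:
  "fps_nth (Abs_fps (xi_coeff c \<theta>) * fps_X ^ k) n = xi_seq c \<theta> (int n - int k) - of_bool (n < k)"
  by (auto simp: fps_X_power_mult_right_nth xi_seq_def simp flip: of_nat_diff)

text \<open>\<open>xi_denom c \<theta> = (X - 1) (\<theta> - X + (1 - \<theta>) X\<^bsup>c+1\<^esup>)\<close>, and the second factor encodes the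
  harmonic recurrence, whose defect along \<open>xi_seq\<close> sits at the boundary.\<close>
lemma xi_coeff_mult_denom:
  assumes "\<theta> > 0"
  shows "Abs_fps (xi_coeff c \<theta>) * xi_denom c \<theta> = xi_numer c \<theta>"
proof (rule fps_ext)
  fix n
  let ?A = "Abs_fps (xi_coeff c \<theta>)" and ?x = "xi_seq c \<theta>"
  let ?a = "\<lambda>k. fps_nth (?A * fps_X ^ k) n"
  have "?A * xi_denom c \<theta> = fps_const (1 - \<theta>) * (?A * fps_X ^ (c + 2))
      - fps_const (1 - \<theta>) * (?A * fps_X ^ (c + 1)) - ?A * fps_X ^ 2
      + fps_const (1 + \<theta>) * (?A * fps_X ^ 1) - fps_const \<theta> * (?A * fps_X ^ 0)"
    by (simp add: xi_denom_def algebra_simps)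
  then have lhs: "fps_nth (?A * xi_denom c \<theta>) n =
      (1 - \<theta>) * ?a (c + 2) - (1 - \<theta>) * ?a (c + 1) - ?a 2 + (1 + \<theta>) * ?a 1 - \<theta> * ?a 0"
    by (simp only: fps_add_nth fps_sub_nth fps_mult_left_const_nth)
  have E1: "\<theta> * ?x (int n - int 0) - ?x (int n - int 1) + (1 - \<theta>) * ?x (int n - int (c + 1))
      = (if n = 1 then real c * (1 - \<theta>) - \<theta> else 0)"
    using xi_seq_defect[OF assms, where m = "int n - 1" and c = c] by (simp add: algebra_simps)
  have E2: "\<theta> * ?x (int n - int 1) - ?x (int n - int 2) + (1 - \<theta>) * ?x (int n - int (c + 2))
      = (if n = 2 then real c * (1 - \<theta>) - \<theta> else 0)"
    using xi_seq_defect[OF assms, where m = "int n - 2" and c = c] by (simp add: algebra_simps)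
  have "fps_nth (?A * xi_denom c \<theta>) n =
      (if n = 2 then real c * (1 - \<theta>) - \<theta> else 0) - (if n = 1 then real c * (1 - \<theta>) - \<theta> else 0)
      - ((1 - \<theta>) * of_bool (n < c + 2) - (1 - \<theta>) * of_bool (n < c + 1) - of_bool (n < 2)
         + (1 + \<theta>) * of_bool (n < 1))"
    unfolding lhs xi_coeff_mult_X_power_nth E1[symmetric] E2[symmetric] by (simp add: algebra_simps)
  also have "\<dots> = fps_nth (xi_numer c \<theta>) n"
    by (auto simp: xi_numer_def fps_X_power_nth algebra_simps)
  finally show "fps_nth (?A * xi_denom c \<theta>) n = fps_nth (xi_numer c \<theta>) n" .
qed

lemma xi_has_fps_expansion:
  assumes "\<theta> > 0"
  shows "xi c \<theta> has_fps_expansion Abs_fps (xi_coeff c \<theta>)"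
proof -
  have "xi c \<theta> has_fps_expansion xi_numer c \<theta> / xi_denom c \<theta>"
    unfolding xi_def[abs_def] xi_numer_def xi_denom_def
    using assms by (intro fps_expansion_intros) simp
  moreover have "fps_nth (xi_denom c \<theta>) 0 \<noteq> 0"
    using assms by (simp add: xi_denom_def)
  then have "xi_denom c \<theta> \<noteq> 0"
    by auto
  ultimately show ?thesis
    using xi_coeff_mult_denom[OF assms] by (metis nonzero_mult_div_cancel_right)
qed

theorem lemma3p5:
  fixes c :: nat and \<theta> :: real
  assumes "c > 0" and "real c / (real c + 1) \<le> \<theta>" and "\<theta> < 1"
  shows "(\<forall>u::nat. rw_pi (int u) c 1 \<theta> = (deriv ^^ u) (xi c \<theta>) 0 / fact u)
       \<and> (\<forall>\<alpha> \<beta> :: nat. \<alpha> > 0 \<longrightarrow> \<beta> > 0 \<longrightarrow>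
            p_quit c 1 \<alpha> \<beta> \<theta> = rw_pi (int \<alpha> - int c * int \<beta> + 1) c 1 \<theta>)"
proof (intro conjI allI impI)
  have "0 < real c / (real c + 1)"
    using assms(1) by simp
  then have "0 < \<theta>"
    using assms(2) by linarith
  have drift: "(1 - \<theta>) * real c \<le> \<theta>"
    using assms(2) by (simp add: divide_le_eq algebra_simps)
  have harmonic: "rw_harmonic c 1 \<theta> (\<lambda>u. rw_pi u c 1 \<theta>)"
    using \<open>0 < \<theta>\<close> assms(3) by (intro rw_harmonic_rw_pi) auto
  have "rw_pi 1 c 1 \<theta> \<le> xi_seq c \<theta> 1"
    using \<open>0 < \<theta>\<close> assms(3)
    by (intro rw_pi_le_harmonic rw_harmonic_xi_seq xi_seq_nonneg) auto
  then have "rw_pi u c 1 \<theta> = xi_seq c \<theta> u" for u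
    using assms(1,3) \<open>0 < \<theta>\<close> drift harmonic rw_pi_bounds
    by (intro rw_harmonic_eq_xi_seq[where f = "\<lambda>u. rw_pi u c 1 \<theta>"]) auto
  then show "rw_pi (int u) c 1 \<theta> = (deriv ^^ u) (xi c \<theta>) 0 / fact u" for u
    using fps_nth_eq_higher_deriv[OF xi_has_fps_expansion[OF \<open>0 < \<theta>\<close>]] by simp
  show "p_quit c 1 \<alpha> \<beta> \<theta> = rw_pi (int \<alpha> - int c * int \<beta> + 1) c 1 \<theta>" if "\<alpha> > 0" for \<alpha> \<beta>
    using that by (rule p_quit_eq_rw_pi)
qed

end
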